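(* Let $A$ be a semiprime non-commutative associative algebra over $\Phi$ with center $Z$. Then: (i) the map $\mathrm{Inn}(A)\to \mathrm{Der}(A)/I_Z$, $\mathrm{ad}\,a\mapsto \mathrm{ad}\,a+I_Z$, is an injective Lie algebra homomorphism whose image is an essential ideal of $\mathrm{Der}(A)/I_Z$; (ii) if $Z$ contains no non-zero associative ideals of $A$ (in particular, if $A$ is prime), then $I_Z=0$.
   Context: $\Phi$ is a unital commutative ring in which $2$ and $3$ are invertible; all algebras are $\Phi$-modules. $\mathrm{Der}(A)$ is the Lie algebra (under $[\delta,\mu]=\delta\mu-\mu\delta$) of all associative derivations $\delta\colon A\to A$ ($\delta(xy)=\delta(x)y+x\delta(y)$). For $a\in A$, $\mathrm{ad}\,a\colon A\to A$, $y\mapsto ay-ya$, and $\mathrm{Inn}(A)=\{\mathrm{ad}\,a: a\in A\}$ is the ideal of inner derivations. $Z$ is the center of $A$ and $I_Z=\{\delta\in\mathrm{Der}(A): \delta(A)\subseteq Z\}$, a Lie ideal of $\mathrm{Der}(A)$. An ideal of a Lie algebra is essential if it has non-zero intersection with every non-zero ideal. *)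

theory Defs
  imports Complex_Main
begin

text \<open>An associative (not necessarily unital) algebra over the commutative ring of
  scalars 'k: the ring structure comes from the type class ring on 'a, and the
  scalar action sc makes 'a a 'k-module compatible with the multiplication.\<close>

definition assoc_algebra :: "('k::comm_ring_1 \<Rightarrow> 'a::ring \<Rightarrow> 'a) \<Rightarrow> bool" where
  "assoc_algebra sc \<longleftrightarrow> module sc \<and>
     (\<forall>r x y. sc r (x * y) = sc r x * y \<and> sc r (x * y) = x * sc r y)"

definition center :: "'a::ring set" where
  "center = {z. \<forall>x. z * x = x * z}"

definition alg_ideal :: "('k::comm_ring_1 \<Rightarrow> 'a::ring \<Rightarrow> 'a) \<Rightarrow> 'a set \<Rightarrow> bool" where
  "alg_ideal sc I \<longleftrightarrow> 0 \<in> I \<and> (\<forall>x\<in>I. \<forall>y\<in>I. x + y \<in> I) \<and> (\<forall>x\<in>I. - x \<in> I)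
     \<and> (\<forall>r. \<forall>x\<in>I. sc r x \<in> I) \<and> (\<forall>a. \<forall>x\<in>I. a * x \<in> I \<and> x * a \<in> I)"

definition semiprime :: "('k::comm_ring_1 \<Rightarrow> 'a::ring \<Rightarrow> 'a) \<Rightarrow> bool" where
  "semiprime sc \<longleftrightarrow> (\<forall>I. alg_ideal sc I \<and> (\<forall>x\<in>I. \<forall>y\<in>I. x * y = 0) \<longrightarrow> I = {0})"

definition prime_alg :: "('k::comm_ring_1 \<Rightarrow> 'a::ring \<Rightarrow> 'a) \<Rightarrow> bool" where
  "prime_alg sc \<longleftrightarrow> (\<forall>I J. alg_ideal sc I \<and> alg_ideal sc J \<and> (\<forall>x\<in>I. \<forall>y\<in>J. x * y = 0)
      \<longrightarrow> I = {0} \<or> J = {0})"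

definition Der :: "('k::comm_ring_1 \<Rightarrow> 'a::ring \<Rightarrow> 'a) \<Rightarrow> ('a \<Rightarrow> 'a) set" where
  "Der sc = {d. (\<forall>x y. d (x + y) = d x + d y) \<and> (\<forall>r x. d (sc r x) = sc r (d x))
                 \<and> (\<forall>x y. d (x * y) = d x * y + x * d y)}"

definition ad :: "'a::ring \<Rightarrow> 'a \<Rightarrow> 'a" where
  "ad a = (\<lambda>y. a * y - y * a)"

definition Inn :: "('a::ring \<Rightarrow> 'a) set" where
  "Inn = range ad"

definition IZ :: "('k::comm_ring_1 \<Rightarrow> 'a::ring \<Rightarrow> 'a) \<Rightarrow> ('a \<Rightarrow> 'a) set" where
  "IZ sc = {d \<in> Der sc. \<forall>x. d x \<in> center}"

definition fadd :: "('a::ring \<Rightarrow> 'a) \<Rightarrow> ('a \<Rightarrow> 'a) \<Rightarrow> 'a \<Rightarrow> 'a" where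
  "fadd d e = (\<lambda>x. d x + e x)"

definition fscale :: "('k \<Rightarrow> 'a \<Rightarrow> 'a) \<Rightarrow> 'k \<Rightarrow> ('a \<Rightarrow> 'a) \<Rightarrow> 'a \<Rightarrow> 'a" where
  "fscale sc r d = (\<lambda>x. sc r (d x))"

definition lie_br :: "('a::ring \<Rightarrow> 'a) \<Rightarrow> ('a \<Rightarrow> 'a) \<Rightarrow> 'a \<Rightarrow> 'a" where
  "lie_br d e = (\<lambda>x. d (e x) - e (d x))"

text \<open>The quotient Lie algebra Der(A)/I_Z: elements are cosets d + I_Z (as sets).\<close>
definition coset :: "('k::comm_ring_1 \<Rightarrow> 'a::ring \<Rightarrow> 'a) \<Rightarrow> ('a \<Rightarrow> 'a) \<Rightarrow> ('a \<Rightarrow> 'a) set" where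
  "coset sc d = {fadd d m | m. m \<in> IZ sc}"

definition quot :: "('k::comm_ring_1 \<Rightarrow> 'a::ring \<Rightarrow> 'a) \<Rightarrow> ('a \<Rightarrow> 'a) set set" where
  "quot sc = coset sc ` Der sc"

definition qadd :: "('k::comm_ring_1 \<Rightarrow> 'a::ring \<Rightarrow> 'a) \<Rightarrow> ('a \<Rightarrow> 'a) set \<Rightarrow> ('a \<Rightarrow> 'a) set \<Rightarrow> ('a \<Rightarrow> 'a) set" where
  "qadd sc X Y = {fadd (fadd d e) m | d e m. d \<in> X \<and> e \<in> Y \<and> m \<in> IZ sc}"

definition qscale :: "('k::comm_ring_1 \<Rightarrow> 'a::ring \<Rightarrow> 'a) \<Rightarrow> 'k \<Rightarrow> ('a \<Rightarrow> 'a) set \<Rightarrow> ('a \<Rightarrow> 'a) set" where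
  "qscale sc r X = {fadd (fscale sc r d) m | d m. d \<in> X \<and> m \<in> IZ sc}"

definition qbr :: "('k::comm_ring_1 \<Rightarrow> 'a::ring \<Rightarrow> 'a) \<Rightarrow> ('a \<Rightarrow> 'a) set \<Rightarrow> ('a \<Rightarrow> 'a) set \<Rightarrow> ('a \<Rightarrow> 'a) set" where
  "qbr sc X Y = {fadd (lie_br d e) m | d e m. d \<in> X \<and> e \<in> Y \<and> m \<in> IZ sc}"

text \<open>Zero of the quotient is the coset I_Z itself. A Lie ideal of the quotient.\<close>
definition quot_lie_ideal :: "('k::comm_ring_1 \<Rightarrow> 'a::ring \<Rightarrow> 'a) \<Rightarrow> ('a \<Rightarrow> 'a) set set \<Rightarrow> bool" where
  "quot_lie_ideal sc S \<longleftrightarrow> S \<subseteq> quot sc \<and> IZ sc \<in> S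
     \<and> (\<forall>X\<in>S. \<forall>Y\<in>S. qadd sc X Y \<in> S) \<and> (\<forall>r. \<forall>X\<in>S. qscale sc r X \<in> S)
     \<and> (\<forall>X\<in>S. \<forall>Y\<in>quot sc. qbr sc Y X \<in> S)"

definition quot_essential :: "('k::comm_ring_1 \<Rightarrow> 'a::ring \<Rightarrow> 'a) \<Rightarrow> ('a \<Rightarrow> 'a) set set \<Rightarrow> bool" where
  "quot_essential sc S \<longleftrightarrow> quot_lie_ideal sc S \<and>
     (\<forall>T. quot_lie_ideal sc T \<and> T \<noteq> {IZ sc} \<longrightarrow> S \<inter> T \<noteq> {IZ sc})"

end

theory Submission
  imports Defs
begin

text \<open>
  A derivation d with central image satisfies d(x)[y,w] + d(y)[x,w] = 0: commute
  d(xy) = d(x) y + x d(y) with w and move the central factors.  For d = ad c this makes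
  [c,x] a central element of square zero, hence zero in a semiprime algebra.  This gives
  injectivity, and since [ad x, D] = ad(-D x), every D outside I_Z brackets into a non-zero
  inner class, which is essentiality.  For a general d in I_Z, taking y = x and halving
  gives d(x)[x,w] = 0, from which d(x)^2 annihilates the ideal generated by the
  commutators.  In a semiprime algebra that annihilator is a central ideal, so in (ii)
  d(x)^2 = 0 and hence d(x) = 0.  A prime non-commutative algebra has no non-zero central
  ideal I, since I annihilates all commutators.
\<close>

locale assoc_alg = module sc for sc :: "'k::comm_ring_1 \<Rightarrow> 'a::ring \<Rightarrow> 'a" +
  assumes scale_mult_left: "sc r (x * y) = sc r x * y"
    and scale_mult_right: "sc r (x * y) = x * sc r y"

lemma assoc_algebra_imp_assoc_alg: "assoc_algebra sc \<Longrightarrow> assoc_alg sc"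
  unfolding assoc_algebra_def assoc_alg_def assoc_alg_axioms_def by blast

lemma (in module) add_self_eq_0_imp_eq_0:
  fixes x :: 'b
  assumes "\<exists>u::'a. 2 * u = 1" and "x + x = 0"
  shows "x = 0"
proof -
  obtain u :: 'a where u: "2 * u = 1" using assms(1) by blast
  have "x = scale (2 * u) x" using u by simp
  also have "\<dots> = scale u (x + x)" by (simp only: mult_2 scale_left_distrib scale_right_distrib)
  finally show ?thesis using assms(2) by simp
qed

subsection \<open>The center and derivations\<close>

lemma centerD: "z \<in> center \<Longrightarrow> z * x = x * z"
  unfolding center_def by auto

lemma center_0: "0 \<in> center"
  unfolding center_def by simp

lemma center_add: "z \<in> center \<Longrightarrow> z' \<in> center \<Longrightarrow> z + z' \<in> center"
  unfolding center_def by (simp add: distrib_left distrib_right)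

lemma center_diff: "z \<in> center \<Longrightarrow> z' \<in> center \<Longrightarrow> z - z' \<in> center"
  unfolding center_def by (simp add: left_diff_distrib right_diff_distrib)

lemma center_uminus: "z \<in> center \<Longrightarrow> - z \<in> center"
  unfolding center_def by simp

lemma DerD:
  assumes "d \<in> Der sc"
  shows "d (x + y) = d x + d y" and "d (sc r x) = sc r (d x)" and "d (x * y) = d x * y + x * d y"
  using assms unfolding Der_def by auto

lemma Der_diff: "d \<in> Der sc \<Longrightarrow> d (x - y) = d x - d y"
  using DerD(1)[of d sc "x - y" y] by (simp add: eq_diff_eq)

lemma Der_center:
  assumes d: "d \<in> Der sc" and z: "z \<in> center"
  shows "d z \<in> center"
  unfolding center_def
proof (intro CollectI allI)
  fix x
  have "d (z * x) = d (x * z)" using centerD[OF z, of x] by simp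
  then have "d z * x + z * d x = d x * z + x * d z" using DerD(3)[OF d] by simp
  then show "d z * x = x * d z" using centerD[OF z, of "d x"] by simp
qed

lemma IZ_D: "m \<in> IZ sc \<Longrightarrow> m \<in> Der sc" "m \<in> IZ sc \<Longrightarrow> m x \<in> center"
  unfolding IZ_def by auto

lemma IZ_commutator_identity:
  assumes "d \<in> IZ sc"
  shows "d x * ad y w + d y * ad x w = 0"
proof -
  have c: "\<And>x. d x \<in> center" using IZ_D(2)[OF assms] .
  have "d (x * y) * w = w * d (x * y)" using centerD[OF c, of "x * y" w] by simp
  then have "(d x * y + x * d y) * w = w * (d x * y + x * d y)"
    using DerD(3)[OF IZ_D(1)[OF assms]] by simp
  moreover have "w * d x * y = d x * w * y" using centerD[OF c, of x w] by simp
  moreover have "x * d y * w = d y * x * w" using centerD[OF c, of y x] by simp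
  moreover have "w * x * d y = d y * w * x" using centerD[OF c, of y "w * x"] by (simp add: mult.assoc)
  ultimately show ?thesis by (simp add: ad_def algebra_simps)
qed

lemma IZ_commutator_identity_sandwich:
  assumes "d \<in> IZ sc"
  shows "d x * w * ad y v + d y * w * ad x v = 0"
proof -
  have "d x * w * ad y v + d y * w * ad x v =
      (d x * ad y (w * v) + d y * ad x (w * v)) - (d x * ad y w + d y * ad x w) * v"
    by (simp add: ad_def algebra_simps)
  then show ?thesis using IZ_commutator_identity[OF assms] by simp
qed

lemma fadd_ad: "fadd (ad a) (ad b) = ad (a + b)"
  by (rule ext) (simp add: ad_def fadd_def algebra_simps)

lemma ad_0: "ad 0 = (\<lambda>x. 0)"
  by (rule ext) (simp add: ad_def)

lemma lie_br_Der_ad: "d \<in> Der sc \<Longrightarrow> lie_br d (ad a) = ad (d a)"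
  by (rule ext) (simp add: ad_def lie_br_def Der_diff DerD(3) algebra_simps)

lemma lie_br_ad_Der: "d \<in> Der sc \<Longrightarrow> lie_br (ad a) d = ad (- d a)"
  by (rule ext) (simp add: ad_def lie_br_def Der_diff DerD(3) algebra_simps)

subsection \<open>Annihilators and semiprimeness\<close>

text \<open>Since A need not be unital, the annihilators of the ideal generated by S are
  described with the extra sandwich condition x w y = 0.\<close>

definition lann :: "'a::ring set \<Rightarrow> 'a set" where
  "lann S = {x. \<forall>y\<in>S. \<forall>w. x * y = 0 \<and> x * w * y = 0}"

definition rann :: "'a::ring set \<Rightarrow> 'a set" where
  "rann S = {y. \<forall>x\<in>S. \<forall>w. x * y = 0 \<and> x * w * y = 0}"

lemma alg_ideal_mult_left: "alg_ideal sc I \<Longrightarrow> x \<in> I \<Longrightarrow> a * x \<in> I"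
  and alg_ideal_mult_right: "alg_ideal sc I \<Longrightarrow> x \<in> I \<Longrightarrow> x * a \<in> I"
  and alg_ideal_diff: "alg_ideal sc I \<Longrightarrow> x \<in> I \<Longrightarrow> y \<in> I \<Longrightarrow> x - y \<in> I"
  unfolding alg_ideal_def diff_conv_add_uminus by blast+

lemma alg_ideal_Int: "alg_ideal sc I \<Longrightarrow> alg_ideal sc J \<Longrightarrow> alg_ideal sc (I \<inter> J)"
  unfolding alg_ideal_def by auto

definition commutators :: "'a::ring set" where
  "commutators = {ad x y | x y. True}"

context assoc_alg
begin

lemma center_scale: "z \<in> center \<Longrightarrow> sc r z \<in> center"
  unfolding center_def by (simp add: scale_mult_left[symmetric] scale_mult_right[symmetric])

lemma alg_ideal_lann: "alg_ideal sc (lann S)"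
  unfolding alg_ideal_def
proof (intro conjI ballI allI)
  fix b x assume "x \<in> lann S"
  then have x: "x * y = 0" "x * w * y = 0" if "y \<in> S" for y w
    using that unfolding lann_def by auto
  then show "b * x \<in> lann S" unfolding lann_def by (simp add: mult.assoc)
  have "x * b * y = 0" "x * b * w * y = 0" if "y \<in> S" for y w
    using x(2)[OF that, of b] x(2)[OF that, of "b * w"] by (simp_all add: mult.assoc)
  then show "x * b \<in> lann S" unfolding lann_def by blast
qed (auto simp: lann_def distrib_right scale_mult_left[symmetric])

lemma alg_ideal_rann: "alg_ideal sc (rann S)"
  unfolding alg_ideal_def
proof (intro conjI ballI allI)
  fix b y assume "y \<in> rann S"
  then have y: "x * y = 0" "x * w * y = 0" if "x \<in> S" for x w
    using that unfolding rann_def by auto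
  then show "y * b \<in> rann S" unfolding rann_def by (simp add: mult.assoc[symmetric])
  have "x * (b * y) = 0" "x * w * (b * y) = 0" if "x \<in> S" for x w
    using y(2)[OF that, of b] y(2)[OF that, of "w * b"] by (simp_all add: mult.assoc)
  then show "b * y \<in> rann S" unfolding rann_def by blast
qed (auto simp: rann_def distrib_left scale_mult_right[symmetric])

lemma semiprime_sandwich_eq_0:
  fixes a :: 'a
  assumes "semiprime sc" and "a * a = 0" and "\<And>w. a * w * a = 0"
  shows "a = 0"
proof -
  define J where "J = lann (rann {a}) \<inter> rann {a}"
  have "alg_ideal sc J"
    unfolding J_def by (intro alg_ideal_Int alg_ideal_lann alg_ideal_rann)
  moreover have "\<forall>x\<in>J. \<forall>y\<in>J. x * y = 0"
    unfolding J_def lann_def by simp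
  ultimately have "J = {0}"
    using assms(1) unfolding semiprime_def by blast
  moreover have "a \<in> rann {a}"
    unfolding rann_def using assms(2,3) by simp
  then have "a \<in> J"
    unfolding J_def lann_def by (simp add: rann_def)
  ultimately show ?thesis by blast
qed

lemma semiprime_central_square_eq_0:
  fixes z :: 'a
  assumes "semiprime sc" and "z \<in> center" and "z * z = 0"
  shows "z = 0"
proof (rule semiprime_sandwich_eq_0[OF assms(1,3)])
  fix w
  have "z * w * z = w * (z * z)"
    using centerD[OF assms(2), of w] by (simp add: mult.assoc[symmetric])
  then show "z * w * z = 0" using assms(3) by simp
qed

subsection \<open>The Lie algebras Der(A) and Der(A)/I_Z\<close>

lemma zero_in_Der: "(\<lambda>x. 0) \<in> Der sc"
  unfolding Der_def by simp

lemma fadd_in_Der: "d \<in> Der sc \<Longrightarrow> e \<in> Der sc \<Longrightarrow> fadd d e \<in> Der sc"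
  unfolding Der_def fadd_def by (auto simp: algebra_simps)

lemma diff_in_Der: "d \<in> Der sc \<Longrightarrow> e \<in> Der sc \<Longrightarrow> (\<lambda>x. d x - e x) \<in> Der sc"
  unfolding Der_def by (auto simp: algebra_simps)

lemma fscale_in_Der: "d \<in> Der sc \<Longrightarrow> fscale sc r d \<in> Der sc"
  unfolding Der_def fscale_def
  by (auto simp: scale_right_distrib scale_mult_left[symmetric] scale_mult_right[symmetric] mult.commute)

lemma lie_br_in_Der:
  assumes "d \<in> Der sc" and "e \<in> Der sc"
  shows "lie_br d e \<in> Der sc"
  unfolding Der_def lie_br_def
  using DerD[OF assms(1)] DerD[OF assms(2)] Der_diff[OF assms(1)] Der_diff[OF assms(2)]
  by (auto simp: algebra_simps)

lemma ad_in_Der: "ad a \<in> Der sc"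
  unfolding Der_def ad_def
  by (auto simp: algebra_simps scale_mult_left[symmetric] scale_mult_right[symmetric])

lemma Inn_subset_Der: "Inn \<subseteq> Der sc"
  unfolding Inn_def using ad_in_Der by auto

lemma fscale_ad: "fscale sc r (ad a) = ad (sc r a)"
  by (rule ext)
    (simp add: ad_def fscale_def scale_right_diff_distrib scale_mult_left[symmetric] scale_mult_right[symmetric])

lemma zero_in_IZ: "(\<lambda>x. 0) \<in> IZ sc"
  unfolding IZ_def using zero_in_Der center_0 by simp

lemma fadd_in_IZ: "d \<in> IZ sc \<Longrightarrow> e \<in> IZ sc \<Longrightarrow> fadd d e \<in> IZ sc"
  unfolding IZ_def using fadd_in_Der[of d e] center_add by (auto simp: fadd_def)

lemma diff_in_IZ: "d \<in> IZ sc \<Longrightarrow> e \<in> IZ sc \<Longrightarrow> (\<lambda>x. d x - e x) \<in> IZ sc"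
  unfolding IZ_def using diff_in_Der[of d e] center_diff by auto

lemma fscale_in_IZ: "d \<in> IZ sc \<Longrightarrow> fscale sc r d \<in> IZ sc"
  unfolding IZ_def using fscale_in_Der[of d r] center_scale by (auto simp: fscale_def)

lemma lie_br_Der_IZ: "d \<in> Der sc \<Longrightarrow> m \<in> IZ sc \<Longrightarrow> lie_br d m \<in> IZ sc"
  unfolding IZ_def using lie_br_in_Der[of d m] center_diff Der_center[of d sc]
  by (auto simp: lie_br_def)

lemma lie_br_IZ_Der: "d \<in> Der sc \<Longrightarrow> m \<in> IZ sc \<Longrightarrow> lie_br m d \<in> IZ sc"
  unfolding IZ_def using lie_br_in_Der[of m d] center_diff Der_center[of d sc]
  by (auto simp: lie_br_def)

lemma self_in_coset: "d \<in> coset sc d"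
proof -
  have "d = fadd d (\<lambda>x. 0)" by (simp add: fadd_def)
  then show ?thesis unfolding coset_def using zero_in_IZ by blast
qed

lemma coset_eq_IZ_iff: "coset sc d = IZ sc \<longleftrightarrow> d \<in> IZ sc"
proof
  assume "d \<in> IZ sc"
  show "coset sc d = IZ sc"
  proof
    show "coset sc d \<subseteq> IZ sc"
      unfolding coset_def using fadd_in_IZ[OF \<open>d \<in> IZ sc\<close>] by auto
    show "IZ sc \<subseteq> coset sc d"
    proof
      fix m assume "m \<in> IZ sc"
      have "m = fadd d (\<lambda>x. m x - d x)" by (simp add: fadd_def)
      moreover have "(\<lambda>x. m x - d x) \<in> IZ sc" using diff_in_IZ[OF \<open>m \<in> IZ sc\<close> \<open>d \<in> IZ sc\<close>] .
      ultimately show "m \<in> coset sc d" unfolding coset_def by blast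
    qed
  qed
qed (use self_in_coset in metis)

lemma coset_eq_imp_diff_in_IZ:
  assumes "coset sc d = coset sc e"
  shows "(\<lambda>x. d x - e x) \<in> IZ sc"
proof -
  obtain m where "m \<in> IZ sc" and "d = fadd e m"
    using self_in_coset[of d] assms unfolding coset_def by blast
  moreover have "(\<lambda>x. fadd e m x - e x) = m" by (simp add: fadd_def)
  ultimately show ?thesis by simp
qed

lemma coset_fadd: "coset sc (fadd d e) = qadd sc (coset sc d) (coset sc e)"
proof
  show "coset sc (fadd d e) \<subseteq> qadd sc (coset sc d) (coset sc e)"
    unfolding coset_def[of sc "fadd d e"] qadd_def using self_in_coset[of d] self_in_coset[of e] by blast
  show "qadd sc (coset sc d) (coset sc e) \<subseteq> coset sc (fadd d e)"
  proof
    fix f assume "f \<in> qadd sc (coset sc d) (coset sc e)"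
    then obtain m1 m2 m where m: "m1 \<in> IZ sc" "m2 \<in> IZ sc" "m \<in> IZ sc"
      and f: "f = fadd (fadd (fadd d m1) (fadd e m2)) m"
      unfolding qadd_def coset_def by blast
    have "f = fadd (fadd d e) (fadd (fadd m1 m2) m)"
      unfolding f by (simp add: fadd_def algebra_simps)
    moreover have "fadd (fadd m1 m2) m \<in> IZ sc" using m fadd_in_IZ by blast
    ultimately show "f \<in> coset sc (fadd d e)" unfolding coset_def by blast
  qed
qed

lemma coset_fscale: "coset sc (fscale sc r d) = qscale sc r (coset sc d)"
proof
  show "coset sc (fscale sc r d) \<subseteq> qscale sc r (coset sc d)"
    unfolding coset_def[of sc "fscale sc r d"] qscale_def using self_in_coset[of d] by blast
  show "qscale sc r (coset sc d) \<subseteq> coset sc (fscale sc r d)"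
  proof
    fix f assume "f \<in> qscale sc r (coset sc d)"
    then obtain m1 m where m: "m1 \<in> IZ sc" "m \<in> IZ sc"
      and f: "f = fadd (fscale sc r (fadd d m1)) m"
      unfolding qscale_def coset_def by blast
    have "f = fadd (fscale sc r d) (fadd (fscale sc r m1) m)"
      unfolding f by (simp add: fadd_def fscale_def scale_right_distrib add.assoc)
    moreover have "fadd (fscale sc r m1) m \<in> IZ sc" using m fadd_in_IZ fscale_in_IZ by blast
    ultimately show "f \<in> coset sc (fscale sc r d)" unfolding coset_def by blast
  qed
qed

lemma coset_lie_br:
  assumes d: "d \<in> Der sc" and e: "e \<in> Der sc"
  shows "coset sc (lie_br d e) = qbr sc (coset sc d) (coset sc e)"
proof
  show "coset sc (lie_br d e) \<subseteq> qbr sc (coset sc d) (coset sc e)"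
    unfolding coset_def[of sc "lie_br d e"] qbr_def using self_in_coset[of d] self_in_coset[of e] by blast
  show "qbr sc (coset sc d) (coset sc e) \<subseteq> coset sc (lie_br d e)"
  proof
    fix f assume "f \<in> qbr sc (coset sc d) (coset sc e)"
    then obtain m1 m2 m where m: "m1 \<in> IZ sc" "m2 \<in> IZ sc" "m \<in> IZ sc"
      and f: "f = fadd (lie_br (fadd d m1) (fadd e m2)) m"
      unfolding qbr_def coset_def by blast
    define M where "M = fadd (fadd (fadd (lie_br d m2) (lie_br m1 e)) (lie_br m1 m2)) m"
    have "f = fadd (lie_br d e) M"
      unfolding f M_def using DerD(1)[OF d] DerD(1)[OF e] DerD(1)[OF IZ_D(1)[OF m(1)]]
        DerD(1)[OF IZ_D(1)[OF m(2)]]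
      by (simp add: fadd_def lie_br_def algebra_simps)
    moreover have "M \<in> IZ sc"
      unfolding M_def using m fadd_in_IZ lie_br_Der_IZ[OF d m(2)] lie_br_IZ_Der[OF e m(1)]
        lie_br_Der_IZ[OF IZ_D(1)[OF m(1)] m(2)]
      by blast
    ultimately show "f \<in> coset sc (lie_br d e)" unfolding coset_def by blast
  qed
qed

subsection \<open>Inner derivations modulo I_Z\<close>

lemma ad_in_IZ_imp_center:
  assumes "semiprime sc" and "ad c \<in> IZ sc"
  shows "c \<in> center"
  unfolding center_def
proof (intro CollectI allI)
  fix x
  have "ad c x * ad c x + ad c c * ad x x = 0"
    using IZ_commutator_identity[OF assms(2)] .
  then have "ad c x * ad c x = 0" by (simp add: ad_def)
  then have "ad c x = 0"
    using semiprime_central_square_eq_0[OF assms(1) IZ_D(2)[OF assms(2)]] by blast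
  then show "c * x = x * c" by (simp add: ad_def)
qed

lemma inj_on_coset_Inn:
  assumes "semiprime sc"
  shows "inj_on (coset sc) Inn"
  unfolding inj_on_def Inn_def
proof clarify
  fix a b assume "coset sc (ad a) = coset sc (ad b)"
  then have "(\<lambda>x. ad a x - ad b x) \<in> IZ sc" by (rule coset_eq_imp_diff_in_IZ)
  moreover have "(\<lambda>x. ad a x - ad b x) = ad (a - b)"
    by (rule ext) (simp add: ad_def algebra_simps)
  ultimately have ab: "a - b \<in> center" using ad_in_IZ_imp_center[OF assms] by simp
  show "ad a = ad b"
  proof
    fix x
    show "ad a x = ad b x" using centerD[OF ab, of x] by (simp add: ad_def algebra_simps)
  qed
qed

lemma quot_lie_idealD:
  assumes "quot_lie_ideal sc T"
  shows "T \<subseteq> quot sc" and "IZ sc \<in> T" and "X \<in> T \<Longrightarrow> Y \<in> quot sc \<Longrightarrow> qbr sc Y X \<in> T"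
  using assms unfolding quot_lie_ideal_def by blast+

lemma coset_ad_in_coset_Inn: "coset sc (ad a) \<in> coset sc ` Inn"
  unfolding Inn_def by blast

lemma quot_lie_ideal_coset_Inn: "quot_lie_ideal sc (coset sc ` Inn)"
  unfolding quot_lie_ideal_def
proof (intro conjI ballI allI)
  show "coset sc ` Inn \<subseteq> quot sc"
    unfolding quot_def using Inn_subset_Der by blast
  have "coset sc (ad 0) = IZ sc" unfolding ad_0 coset_eq_IZ_iff by (rule zero_in_IZ)
  then show "IZ sc \<in> coset sc ` Inn" using coset_ad_in_coset_Inn by metis
next
  fix X Y assume "X \<in> coset sc ` Inn" "Y \<in> coset sc ` Inn"
  then obtain a b where "X = coset sc (ad a)" "Y = coset sc (ad b)" unfolding Inn_def by blast
  then have "qadd sc X Y = coset sc (ad (a + b))" by (simp add: coset_fadd[symmetric] fadd_ad)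
  then show "qadd sc X Y \<in> coset sc ` Inn" by (simp add: coset_ad_in_coset_Inn)
next
  fix r X assume "X \<in> coset sc ` Inn"
  then obtain a where "X = coset sc (ad a)" unfolding Inn_def by blast
  then have "qscale sc r X = coset sc (ad (sc r a))" by (simp add: coset_fscale[symmetric] fscale_ad)
  then show "qscale sc r X \<in> coset sc ` Inn" by (simp add: coset_ad_in_coset_Inn)
next
  fix X Y assume "X \<in> coset sc ` Inn" "Y \<in> quot sc"
  then obtain a d where "X = coset sc (ad a)" "Y = coset sc d" and d: "d \<in> Der sc"
    unfolding Inn_def quot_def by blast
  then have "qbr sc Y X = coset sc (ad (d a))"
    by (simp add: coset_lie_br[OF d ad_in_Der, symmetric] lie_br_Der_ad[OF d])
  then show "qbr sc Y X \<in> coset sc ` Inn" by (simp add: coset_ad_in_coset_Inn)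
qed

lemma quot_essential_coset_Inn:
  assumes "semiprime sc"
  shows "quot_essential sc (coset sc ` Inn)"
  unfolding quot_essential_def
proof (intro conjI allI impI)
  show "quot_lie_ideal sc (coset sc ` Inn)" by (rule quot_lie_ideal_coset_Inn)
  fix T assume "quot_lie_ideal sc T \<and> T \<noteq> {IZ sc}"
  then have T: "quot_lie_ideal sc T" and "T \<noteq> {IZ sc}" by blast+
  then obtain X where X: "X \<in> T" "X \<noteq> IZ sc"
    using quot_lie_idealD(2)[OF T] by blast
  then obtain d where X_eq: "X = coset sc d" and d: "d \<in> Der sc"
    using quot_lie_idealD(1)[OF T] unfolding quot_def by blast
  then have "d \<notin> IZ sc" using X(2) coset_eq_IZ_iff by blast
  then obtain x where x: "d x \<notin> center" unfolding IZ_def using d by blast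
  have "coset sc (ad x) \<in> quot sc" unfolding quot_def using ad_in_Der by blast
  then have "qbr sc (coset sc (ad x)) X \<in> T" by (rule quot_lie_idealD(3)[OF T X(1)])
  moreover have "qbr sc (coset sc (ad x)) X = coset sc (ad (- d x))"
    unfolding X_eq coset_lie_br[OF ad_in_Der d, symmetric] lie_br_ad_Der[OF d] ..
  moreover have "coset sc (ad (- d x)) \<noteq> IZ sc"
  proof
    assume "coset sc (ad (- d x)) = IZ sc"
    then have "- d x \<in> center"
      by (rule ad_in_IZ_imp_center[OF assms, unfolded coset_eq_IZ_iff[symmetric]])
    then have "d x \<in> center" using center_uminus[of "- d x"] by simp
    with x show False ..
  qed
  ultimately show "coset sc ` Inn \<inter> T \<noteq> {IZ sc}"
    using coset_ad_in_coset_Inn[of "- d x"] by blast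
qed

subsection \<open>Central ideals and I_Z\<close>

lemma lann_commutators_subset_center:
  assumes "semiprime sc"
  shows "lann (commutators :: 'a set) \<subseteq> center"
proof
  fix a :: 'a assume a: "a \<in> lann commutators"
  show "a \<in> center" unfolding center_def
  proof (intro CollectI allI)
    fix x
    have "ad a x \<in> lann commutators"
      unfolding ad_def
      using alg_ideal_mult_right[OF alg_ideal_lann a] alg_ideal_mult_left[OF alg_ideal_lann a]
      by (rule alg_ideal_diff[OF alg_ideal_lann])
    moreover have "ad a x \<in> commutators" unfolding commutators_def by blast
    ultimately have "ad a x * ad a x = 0" "ad a x * w * ad a x = 0" for w
      unfolding lann_def by blast+
    then have "ad a x = 0" by (rule semiprime_sandwich_eq_0[OF assms])
    then show "a * x = x * a" by (simp add: ad_def)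
  qed
qed

lemma IZ_square_in_lann_commutators:
  assumes two: "\<exists>u::'k. 2 * u = 1" and d: "d \<in> IZ sc"
  shows "d x * d x \<in> lann commutators"
proof -
  have c: "\<And>x. d x \<in> center" using IZ_D(2)[OF d] .
  have dx_ad_x: "d x * ad x w = 0" for w
    using add_self_eq_0_imp_eq_0[OF two IZ_commutator_identity[OF d, of x x w]] .
  have "d x * d x * ad y w = 0" for y w
  proof -
    have "d x * (d x * ad y w + d y * ad x w) = 0" using IZ_commutator_identity[OF d] by simp
    moreover have "d x * (d y * ad x w) = d y * (d x * ad x w)"
      using centerD[OF c, of x "d y"] by (simp add: mult.assoc[symmetric])
    ultimately show ?thesis using dx_ad_x by (simp add: distrib_left mult.assoc)
  qed
  moreover have "d x * d x * w * ad y v = 0" for y w v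
  proof -
    have "d x * (w * d x) * ad y v + d y * (w * d x) * ad x v = 0"
      by (rule IZ_commutator_identity_sandwich[OF d])
    moreover have "d y * (w * d x) * ad x v = d y * w * (d x * ad x v)" by (simp add: mult.assoc)
    moreover have "d x * (w * d x) = d x * d x * w"
      using centerD[OF c, of x w] by (simp add: mult.assoc)
    ultimately show ?thesis using dx_ad_x by simp
  qed
  ultimately show ?thesis unfolding lann_def commutators_def by blast
qed

lemma IZ_eq_zero_if_no_central_ideals:
  assumes "semiprime sc" and "\<exists>u::'k. 2 * u = 1"
    and no_central: "\<forall>I. alg_ideal sc I \<and> I \<subseteq> center \<longrightarrow> I = {0}"
  shows "IZ sc = {\<lambda>x. 0}"
proof -
  have "d = (\<lambda>x. 0)" if d: "d \<in> IZ sc" for d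
  proof
    fix x
    have "lann (commutators :: 'a set) = {0}"
      using no_central alg_ideal_lann lann_commutators_subset_center[OF assms(1)] by blast
    then have "d x * d x = 0" using IZ_square_in_lann_commutators[OF assms(2) d] by blast
    then show "d x = 0" using semiprime_central_square_eq_0[OF assms(1) IZ_D(2)[OF d]] by blast
  qed
  then show ?thesis using zero_in_IZ by blast
qed

lemma prime_noncomm_no_central_ideals:
  assumes prime: "prime_alg sc" and noncomm: "\<exists>x y::'a. x * y \<noteq> y * x"
  shows "\<forall>I. alg_ideal sc I \<and> I \<subseteq> center \<longrightarrow> I = {0}"
proof (intro allI impI)
  fix I assume "alg_ideal sc I \<and> I \<subseteq> center"
  then have I: "alg_ideal sc I" and I_central: "I \<subseteq> center" by blast+
  obtain x y :: 'a where "x * y \<noteq> y * x" using noncomm by blast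
  then have xy: "ad x y \<noteq> 0" by (simp add: ad_def)
  have ann: "s * ad x y = 0" if "s \<in> I" for s
  proof -
    have "s * x \<in> center" using alg_ideal_mult_right[OF I that] I_central by blast
    then have "s * x * y = y * (s * x)" by (rule centerD)
    also have "\<dots> = s * y * x"
      using centerD[of s y] that I_central by (auto simp: mult.assoc[symmetric])
    finally show ?thesis by (simp add: ad_def right_diff_distrib mult.assoc)
  qed
  have "ad x y \<in> rann I"
    unfolding rann_def using ann alg_ideal_mult_right[OF I] by blast
  then have "rann I \<noteq> {0}" using xy by blast
  moreover have "\<forall>s\<in>I. \<forall>t\<in>rann I. s * t = 0" unfolding rann_def by blast
  ultimately show "I = {0}"
    using prime[unfolded prime_alg_def, rule_format, OF conjI[OF I conjI[OF alg_ideal_rann]]] by blast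
qed
end

theorem lemma2p4:
  fixes sc :: "'k::comm_ring_1 \<Rightarrow> 'a::ring \<Rightarrow> 'a"
  assumes "\<exists>u::'k. 2 * u = 1" and "\<exists>v::'k. 3 * v = 1"
    and "assoc_algebra sc"
    and "semiprime sc"
    and "\<exists>x y::'a. x * y \<noteq> y * x"
  shows "inj_on (coset sc) Inn
       \<and> (\<forall>d\<in>Inn. \<forall>e\<in>Inn. coset sc (fadd d e) = qadd sc (coset sc d) (coset sc e)
                        \<and> coset sc (lie_br d e) = qbr sc (coset sc d) (coset sc e))
       \<and> (\<forall>r. \<forall>d\<in>Inn. coset sc (fscale sc r d) = qscale sc r (coset sc d))
       \<and> quot_essential sc (coset sc ` Inn)
       \<and> ((\<forall>I. alg_ideal sc I \<and> I \<subseteq> center \<longrightarrow> I = {0}) \<longrightarrow> IZ sc = {\<lambda>x. 0})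
       \<and> (prime_alg sc \<longrightarrow> IZ sc = {\<lambda>x. 0})"
proof -
  interpret assoc_alg sc using assms(3) by (rule assoc_algebra_imp_assoc_alg)
  have hom: "\<forall>d\<in>Inn. \<forall>e\<in>Inn. coset sc (fadd d e) = qadd sc (coset sc d) (coset sc e)
                        \<and> coset sc (lie_br d e) = qbr sc (coset sc d) (coset sc e)"
    using coset_fadd coset_lie_br Inn_subset_Der by blast
  have IZ_trivial: "(\<forall>I. alg_ideal sc I \<and> I \<subseteq> center \<longrightarrow> I = {0}) \<longrightarrow> IZ sc = {\<lambda>x. 0}"
    using IZ_eq_zero_if_no_central_ideals[OF assms(4,1)] by blast
  show ?thesis
    using inj_on_coset_Inn[OF assms(4)] hom coset_fscale quot_essential_coset_Inn[OF assms(4)]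
      IZ_trivial prime_noncomm_no_central_ideals[OF _ assms(5)]
    by blast
qed

end
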